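(* Let $c,d\in\mathbb{R}^n$ be distinct nonzero vectors with $c^Td\le0$. Set $e=c-d$, $\beta=c^Te$, and $$d_+=d-(c^Td)\Big(\frac{e}{\beta}-\frac{c}{\|c\|\sqrt{\beta}}\Big),\qquad c_+=c-(c^Tc)\Big(\frac{e}{\beta}-\frac{c}{\|c\|\sqrt{\beta}}\Big).$$ Then $\gamma[c_+,d_+]\ge\gamma[c,d]+(\gamma[c,d])^3$.
   Context: For distinct vectors $c,d\in\mathbb{R}^n$, $\gamma[c,d]=\frac{\sqrt{\|c\|^2\|d\|^2-(c^Td)^2}}{\|c-d\|^2}$ (symmetric in $c,d$). Note $\beta=\|c\|^2-c^Td>0$ under the hypotheses. *)

theory Defs
  imports "HOL-Analysis.Analysis"
begin

definition gamma :: "real^'n \<Rightarrow> real^'n \<Rightarrow> real" where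
  "gamma c d = sqrt ((norm c)^2 * (norm d)^2 - (c \<bullet> d)^2) / (norm (c - d))^2"

end

theory Submission
  imports Defs
begin

(*
  The update moves c and d by multiples of one vector w, so c+ and d+ stay in the span of c
  and d: both have the same d-coefficient a/beta (a = |c|^2), and c+ - d+ = (sqrt beta / |c|) c.
  Hence |c+ - d+|^2 = beta and the Gram determinant G of (c, d) gets multiplied by a/beta, so
  gamma[c+,d+] = sqrt G sqrt(a/beta) / beta >= sqrt G a / beta^2, while gamma[c,d] = sqrt G / E
  with E = |c - d|^2 and G = a E - beta^2.  The claim then reduces to
    a/beta^2 - 1/E - G/E^3 = (E^2 - beta^2) G / (beta^2 E^3) >= 0,
  where E >= beta because beta^2 <= a E <= beta E.
*)

definition gram_det :: "'a::real_inner \<Rightarrow> 'a \<Rightarrow> real" where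
  "gram_det c d = (norm c)^2 * (norm d)^2 - (c \<bullet> d)^2"

lemma gram_det_nonneg: "0 \<le> gram_det c d"
  using Cauchy_Schwarz_ineq[of c d] by (simp add: gram_det_def power2_norm_eq_inner)

lemma gram_det_lincomb:
  "gram_det (x *\<^sub>R d + y *\<^sub>R c) (x' *\<^sub>R d + y' *\<^sub>R c) = (x * y' - y * x')^2 * gram_det c d"
  unfolding gram_det_def power2_norm_eq_inner
  by (simp add: inner_add_left inner_add_right inner_commute[of d c] power2_eq_square)
     (simp add: algebra_simps)

lemma gram_det_eq_diff:
  "gram_det c d = (c \<bullet> c) * (norm (c - d))^2 - (c \<bullet> (c - d))^2"
  unfolding gram_det_def power2_norm_eq_inner
  by (simp add: inner_diff_left inner_diff_right inner_commute[of d c] algebra_simps power2_eq_square)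

lemma gamma_eq_gram_det: "gamma c d = sqrt (gram_det c d) / (norm (c - d))^2"
  by (simp add: gamma_def gram_det_def)

lemma update_as_lincomb:
  fixes c d :: "'a::real_inner"
  assumes "c \<noteq> 0" and "c \<bullet> d \<le> 0"
  defines "\<beta> \<equiv> c \<bullet> (c - d)"
  defines "w \<equiv> (1 / \<beta>) *\<^sub>R (c - d) - (1 / (norm c * sqrt \<beta>)) *\<^sub>R c"
  obtains m l where "c - (c \<bullet> c) *\<^sub>R w = ((c \<bullet> c) / \<beta>) *\<^sub>R d + m *\<^sub>R c"
    and "d - (c \<bullet> d) *\<^sub>R w = ((c \<bullet> c) / \<beta>) *\<^sub>R d + l *\<^sub>R c"
    and "m - l = sqrt \<beta> / norm c"
proof
  have \<beta>_eq: "\<beta> = c \<bullet> c - c \<bullet> d" by (simp add: \<beta>_def inner_diff_right)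
  have "c \<bullet> c > 0" using assms(1) by simp
  then have "\<beta> > 0" using assms(2) unfolding \<beta>_eq by linarith
  define m where "m = 1 - (c \<bullet> c) / \<beta> + (c \<bullet> c) / (norm c * sqrt \<beta>)"
  define l where "l = (c \<bullet> d) / (norm c * sqrt \<beta>) - (c \<bullet> d) / \<beta>"
  show "c - (c \<bullet> c) *\<^sub>R w = ((c \<bullet> c) / \<beta>) *\<^sub>R d + m *\<^sub>R c"
    by (simp add: w_def m_def algebra_simps)
  have "(c \<bullet> c) / \<beta> = (\<beta> + c \<bullet> d) / \<beta>" by (simp add: \<beta>_eq)
  then have d_coeff: "(c \<bullet> c) / \<beta> = 1 + (c \<bullet> d) / \<beta>"
    using \<open>\<beta> > 0\<close> by (simp add: add_divide_distrib)
  show "d - (c \<bullet> d) *\<^sub>R w = ((c \<bullet> c) / \<beta>) *\<^sub>R d + l *\<^sub>R c"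
    unfolding d_coeff by (simp add: w_def l_def algebra_simps)
  have "m - l = 1 - (c \<bullet> c - c \<bullet> d) / \<beta> + (c \<bullet> c - c \<bullet> d) / (norm c * sqrt \<beta>)"
    by (simp add: m_def l_def diff_divide_distrib)
  also have "\<dots> = \<beta> / (norm c * sqrt \<beta>)"
    using \<open>\<beta> > 0\<close> unfolding \<beta>_eq[symmetric] by simp
  also have "\<dots> = sqrt \<beta> / norm c"
    using \<open>\<beta> > 0\<close> real_div_sqrt[of \<beta>] by (metis divide_divide_eq_left less_imp_le mult.commute)
  finally show "m - l = sqrt \<beta> / norm c" .
qed

lemma gamma_update:
  fixes c d :: "real^'n"
  assumes "c \<noteq> 0" and "c \<bullet> d \<le> 0"
  defines "\<beta> \<equiv> c \<bullet> (c - d)"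
  defines "w \<equiv> (1 / \<beta>) *\<^sub>R (c - d) - (1 / (norm c * sqrt \<beta>)) *\<^sub>R c"
  shows "gamma (c - (c \<bullet> c) *\<^sub>R w) (d - (c \<bullet> d) *\<^sub>R w)
         = sqrt (gram_det c d) * sqrt ((c \<bullet> c) / \<beta>) / \<beta>"
proof -
  obtain m l where cp: "c - (c \<bullet> c) *\<^sub>R w = ((c \<bullet> c) / \<beta>) *\<^sub>R d + m *\<^sub>R c"
    and dp: "d - (c \<bullet> d) *\<^sub>R w = ((c \<bullet> c) / \<beta>) *\<^sub>R d + l *\<^sub>R c"
    and ml: "m - l = sqrt \<beta> / norm c"
    using update_as_lincomb[OF assms(1,2)] unfolding \<beta>_def w_def by blast
  have "c \<bullet> c > 0" using assms(1) by simp
  then have "\<beta> > 0" using assms(2) unfolding \<beta>_def inner_diff_right by linarith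
  have norm_sq: "(norm c)^2 = c \<bullet> c" by (simp add: power2_norm_eq_inner)
  have ml_sq: "(m - l)^2 = \<beta> / (c \<bullet> c)"
    using \<open>\<beta> > 0\<close> by (simp add: ml power_divide norm_sq)
  have "(norm ((m - l) *\<^sub>R c))^2 = \<beta>"
    using assms(1) by (simp add: power_mult_distrib ml_sq norm_sq)
  then have dist_sq: "(norm ((c - (c \<bullet> c) *\<^sub>R w) - (d - (c \<bullet> d) *\<^sub>R w)))^2 = \<beta>"
    by (simp add: cp dp algebra_simps)
  have "gram_det (c - (c \<bullet> c) *\<^sub>R w) (d - (c \<bullet> d) *\<^sub>R w)
        = ((c \<bullet> c) / \<beta>)^2 * (m - l)^2 * gram_det c d"
    unfolding cp dp gram_det_lincomb by algebra
  also have "\<dots> = gram_det c d * ((c \<bullet> c) / \<beta>)"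
    unfolding ml_sq using \<open>c \<bullet> c > 0\<close> \<open>\<beta> > 0\<close> by (simp add: power2_eq_square)
  finally show ?thesis
    unfolding gamma_eq_gram_det dist_sq by (simp only: real_sqrt_mult)
qed

lemma gamma_growth_bound:
  fixes a \<beta> E :: real
  assumes "0 < a" and "a \<le> \<beta>" and "\<beta>^2 \<le> a * E"
  defines "G \<equiv> a * E - \<beta>^2"
  shows "sqrt G / E + (sqrt G / E)^3 \<le> sqrt G * sqrt (a / \<beta>) / \<beta>"
proof -
  have "\<beta> > 0" using assms(1,2) by simp
  then have "0 < a * E" using assms(3) by (smt (verit) zero_less_power2)
  then have "E > 0" using assms(1) zero_less_mult_pos by blast
  have "G \<ge> 0" using assms(3) by (simp add: G_def)
  have "\<beta>^2 \<le> \<beta> * E"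
    using assms(2,3) \<open>E > 0\<close> by (meson order_trans mult_right_mono less_imp_le)
  then have "\<beta> \<le> E" using \<open>\<beta> > 0\<close> by (simp add: power2_eq_square)
  have "a / \<beta>^2 - (1 / E + G / E^3) = (E^2 - \<beta>^2) * G / (\<beta>^2 * E^3)"
    using \<open>\<beta> > 0\<close> \<open>E > 0\<close> by (simp add: G_def field_simps) algebra
  also have "\<dots> \<ge> 0"
    using \<open>\<beta> \<le> E\<close> \<open>\<beta> > 0\<close> \<open>G \<ge> 0\<close> by (simp add: power_mono)
  finally have "1 / E + G / E^3 \<le> a / \<beta>^2" by simp
  also have "a / \<beta>^2 \<le> sqrt (a / \<beta>) / \<beta>"
  proof -
    have "a / \<beta> \<le> 1" "0 \<le> a / \<beta>" using assms(1,2) \<open>\<beta> > 0\<close> by simp_all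
    then have "(a / \<beta>)^2 \<le> a / \<beta>" by (metis power2_eq_square mult_left_le)
    then have "a / \<beta> \<le> sqrt (a / \<beta>)" by (rule real_le_rsqrt)
    then show ?thesis
      using \<open>\<beta> > 0\<close> by (simp add: power2_eq_square divide_right_mono flip: divide_divide_eq_left)
  qed
  finally have "sqrt G * (1 / E + G / E^3) \<le> sqrt G * (sqrt (a / \<beta>) / \<beta>)"
    by (rule mult_left_mono) (simp add: \<open>G \<ge> 0\<close>)
  moreover have "(sqrt G)^3 = sqrt G * G"
    using \<open>G \<ge> 0\<close> by (simp add: power3_eq_cube)
  ultimately show ?thesis by (simp add: power_divide field_simps)
qed

theorem mainTheorem9:
  fixes c d :: "real^'n"
  assumes "c \<noteq> d" and "c \<noteq> 0" and "d \<noteq> 0" and "c \<bullet> d \<le> 0"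
  shows "let e = c - d; \<beta> = c \<bullet> e;
             w = (1 / \<beta>) *\<^sub>R e - (1 / (norm c * sqrt \<beta>)) *\<^sub>R c;
             dp = d - (c \<bullet> d) *\<^sub>R w;
             cp = c - (c \<bullet> c) *\<^sub>R w
         in gamma cp dp \<ge> gamma c d + (gamma c d)^3"
proof -
  define \<beta> where "\<beta> = c \<bullet> (c - d)"
  have G: "gram_det c d = (c \<bullet> c) * (norm (c - d))^2 - \<beta>^2"
    by (simp add: \<beta>_def gram_det_eq_diff)
  have "0 < c \<bullet> c" "c \<bullet> c \<le> \<beta>"
    using assms(2,4) by (simp_all add: \<beta>_def inner_diff_right)
  moreover have "\<beta>^2 \<le> (c \<bullet> c) * (norm (c - d))^2"
    using gram_det_nonneg[of c d] by (simp add: G)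
  ultimately have "gamma c d + (gamma c d)^3 \<le> sqrt (gram_det c d) * sqrt ((c \<bullet> c) / \<beta>) / \<beta>"
    unfolding gamma_eq_gram_det G by (rule gamma_growth_bound)
  then show ?thesis
    using gamma_update[OF assms(2,4)] by (simp add: Let_def \<beta>_def)
qed

end
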